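(* Let $S=(w_1,\ldots,w_{3m})$ be a list of $3m$ positive integers and let $b$ be an integer. If there is a partition of $\{1,\ldots,3m\}$ into $m$ sets $S_1,\ldots,S_m$ with $\sum_{i\in S_j}w_i=b$ for each $j$, then the graph $G(S,b)$ has a path decomposition of width at most $4$ and length at most $l=1-2m+2\sum_{i=1}^{3m}w_i$.
   Context: A path decomposition of a graph $G$ is a sequence $(X_1,\ldots,X_l)$ of subsets of $V(G)$ covering $V(G)$, such that every edge lies in some $X_i$, and $X_i\cap X_k\subseteq X_j$ whenever $i\leq j\leq k$; width is $\max_i|X_i|-1$, length is $l$. Construction of $G(S,b)$: for each $i\in\{1,\ldots,3m\}$ build $H_i$ from $w_i$ disjoint copies $K_3^{i,1},\ldots,K_3^{i,w_i}$ of $K_3$ and $w_i-1$ disjoint copies $K_4^{i,1},\ldots,K_4^{i,w_i-1}$ of $K_4$ by identifying, for each $q=1,\ldots,w_i-1$, two distinct vertices of $K_4^{i,q}$ with a vertex of $K_3^{i,q}$ and with a vertex of $K_3^{i,q+1}$ respectively, done so that each vertex of each $K_3^{i,q}$ is identified with at most one vertex from other cliques (a chain alternating triangles and $K_4$'s). Build $H_{m,b}$ from $m+1$ disjoint copies $K_5^1,\ldots,K_5^{m+1}$ of $K_5$ and $m$ disjoint copies $P_b^1,\ldots,P_b^m$ of the path with $b$ edges, by identifying, for each $j=1,\ldots,m$, one endpoint of $P_b^j$ with a vertex of $K_5^j$ and the other endpoint with a vertex of $K_5^{j+1}$, such that no vertex of any $K_5^j$ is identified with endpoints of two different paths. $G(S,b)$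 is the disjoint union of $H_1,\ldots,H_{3m}$ and $H_{m,b}$. *)

theory Defs
  imports Main
begin

definition is_path_decomposition :: "'v set \<Rightarrow> 'v set set \<Rightarrow> 'v set list \<Rightarrow> bool" where
  "is_path_decomposition V E Xs \<longleftrightarrow>
     (\<forall>X\<in>set Xs. X \<subseteq> V) \<and>
     \<Union>(set Xs) = V \<and>
     (\<forall>e\<in>E. \<exists>X\<in>set Xs. e \<subseteq> X) \<and>
     (\<forall>i j k. i \<le> j \<and> j \<le> k \<and> k < length Xs \<longrightarrow> Xs ! i \<inter> Xs ! k \<subseteq> Xs ! j)"

definition pd_width :: "'v set list \<Rightarrow> int" where
  "pd_width Xs = (MAX X\<in>set Xs. int (card X)) - 1"

definition clique_edges :: "'v set \<Rightarrow> 'v set set" where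
  "clique_edges K = {{x, y} | x y. x \<in> K \<and> y \<in> K \<and> x \<noteq> y}"

text \<open>Vertices: T i q r = vertex r (r<3) of triangle K3^{i,q};
  F i q r = the two private vertices (r<2) of K4^{i,q};
  C j k = vertex k (k<5) of K5^j; P j t = internal vertex t of path P_b^j.\<close>
datatype vert = T nat nat nat | F nat nat nat | C nat nat | P nat nat

definition tri :: "nat \<Rightarrow> nat \<Rightarrow> vert set" where
  "tri i q = {T i q 0, T i q 1, T i q 2}"

text \<open>K4^{i,q}: identified with vertex 1 of K3^{i,q} and vertex 0 of K3^{i,q+1}\<close>
definition k4 :: "nat \<Rightarrow> nat \<Rightarrow> vert set" where
  "k4 i q = {T i q 1, T i (Suc q) 0, F i q 0, F i q 1}"

definition k5 :: "nat \<Rightarrow> vert set" where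
  "k5 j = {C j k | k. k < 5}"

text \<open>the t-th vertex (0 \<le> t \<le> b) of path P_b^j, endpoints identified with
  vertex 1 of K5^j and vertex 0 of K5^{j+1}\<close>
definition pathv :: "nat \<Rightarrow> nat \<Rightarrow> nat \<Rightarrow> vert" where
  "pathv b j t = (if t = 0 then C j 1 else if t = b then C (Suc j) 0 else P j t)"

definition path_verts :: "nat \<Rightarrow> nat \<Rightarrow> vert set" where
  "path_verts b j = pathv b j ` {0..b}"

definition path_edges :: "nat \<Rightarrow> nat \<Rightarrow> vert set set" where
  "path_edges b j = {{pathv b j t, pathv b j (Suc t)} | t. t < b}"

definition H_verts :: "(nat \<Rightarrow> nat) \<Rightarrow> nat \<Rightarrow> vert set" where
  "H_verts w i = (\<Union>q\<in>{1..w i}. tri i q) \<union> (\<Union>q\<in>{1..<w i}. k4 i q)"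

definition H_edges :: "(nat \<Rightarrow> nat) \<Rightarrow> nat \<Rightarrow> vert set set" where
  "H_edges w i = (\<Union>q\<in>{1..w i}. clique_edges (tri i q)) \<union> (\<Union>q\<in>{1..<w i}. clique_edges (k4 i q))"

definition Hmb_verts :: "nat \<Rightarrow> nat \<Rightarrow> vert set" where
  "Hmb_verts m b = (\<Union>j\<in>{1..m+1}. k5 j) \<union> (\<Union>j\<in>{1..m}. path_verts b j)"

definition Hmb_edges :: "nat \<Rightarrow> nat \<Rightarrow> vert set set" where
  "Hmb_edges m b = (\<Union>j\<in>{1..m+1}. clique_edges (k5 j)) \<union> (\<Union>j\<in>{1..m}. path_edges b j)"

text \<open>G(S,b) for S = (w 1, ..., w (3m)); the path has nat b edges\<close>
definition G_verts :: "nat \<Rightarrow> (nat \<Rightarrow> nat) \<Rightarrow> int \<Rightarrow> vert set" where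
  "G_verts m w b = (\<Union>i\<in>{1..3*m}. H_verts w i) \<union> Hmb_verts m (nat b)"

definition G_edges :: "nat \<Rightarrow> (nat \<Rightarrow> nat) \<Rightarrow> int \<Rightarrow> vert set set" where
  "G_edges m w b = (\<Union>i\<in>{1..3*m}. H_edges w i) \<union> Hmb_edges m (nat b)"

end

theory Submission
  imports Defs
begin

text \<open>
  The bags walk along the paths of \<open>H_{m,b}\<close>. Between the bags \<open>K\<^sub>5\<^sup>j\<close> and
  \<open>K\<^sub>5\<^sup>j\<^sup>+\<^sup>1\<close>, the gadgets \<open>H\<^sub>i\<close>, \<open>i \<in> S\<^sub>j\<close>, are threaded one after the
  other along the path \<open>P\<^sub>b\<^sup>j\<close>: the \<open>q\<close>-th triangle of \<open>H\<^sub>i\<close> shares a bag with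
  the current path edge, and the following \<open>K\<^sub>4\<close> shares a bag with the path vertex reached.
  Every bag then has at most 5 vertices, and \<open>H\<^sub>i\<close> consumes exactly \<open>w\<^sub>i\<close> path edges
  in \<open>2w\<^sub>i - 1\<close> bags. Since the weights in \<open>S\<^sub>j\<close> add up to \<open>b\<close>, the gadgets of
  \<open>S\<^sub>j\<close> use up \<open>P\<^sub>b\<^sup>j\<close> exactly, and consecutive pieces of the sequence only
  share the vertex where they are glued; this gives \<open>1 + \<Sum>\<^sub>j (2b - |S\<^sub>j| + 1) =
  1 - 2m + 2\<Sum>\<^sub>i w\<^sub>i\<close> bags.
\<close>

lemma path_decomposition_Nil_iff: "is_path_decomposition V E [] \<longleftrightarrow> V = {} \<and> E = {}"
  unfolding is_path_decomposition_def by auto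

lemma path_decomposition_singleton:
  assumes "V = X" "\<forall>e\<in>E. e \<subseteq> X"
  shows "is_path_decomposition V E [X]"
  using assms unfolding is_path_decomposition_def by auto

lemma path_decomposition_append:
  assumes Xs: "is_path_decomposition V E Xs" and Ys: "is_path_decomposition W E' Ys"
    and glue: "V \<inter> W \<subseteq> last Xs \<inter> hd Ys"
  shows "is_path_decomposition (V \<union> W) (E \<union> E') (Xs @ Ys)"
proof (cases "Xs = [] \<or> Ys = []")
  case True
  then show ?thesis using Xs Ys by (auto simp: path_decomposition_Nil_iff)
next
  case False
  let ?l = "length Xs"
  have V: "V = \<Union>(set Xs)" and W: "W = \<Union>(set Ys)"
    using Xs Ys unfolding is_path_decomposition_def by auto
  have last: "last Xs = Xs ! (?l - 1)" and hd: "hd Ys = Ys ! 0"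
    using False by (simp_all add: last_conv_nth hd_conv_nth)
  have RX: "Xs ! i \<inter> Xs ! k \<subseteq> Xs ! j" if "i \<le> j" "j \<le> k" "k < ?l" for i j k
    using Xs that unfolding is_path_decomposition_def by blast
  have RY: "Ys ! i \<inter> Ys ! k \<subseteq> Ys ! j" if "i \<le> j" "j \<le> k" "k < length Ys" for i j k
    using Ys that unfolding is_path_decomposition_def by blast
  have "(Xs @ Ys) ! i \<inter> (Xs @ Ys) ! k \<subseteq> (Xs @ Ys) ! j"
    if ijk: "i \<le> j" "j \<le> k" "k < length (Xs @ Ys)" for i j k
  proof (cases "k < ?l")
    case True
    then show ?thesis using RX[of i j k] ijk by (simp add: nth_append)
  next
    case kge: False
    show ?thesis
    proof (cases "?l \<le> i")
      case True
      then show ?thesis using RY[of "i - ?l" "j - ?l" "k - ?l"] ijk by (simp add: nth_append)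
    next
      case ilt: False
      have "Xs ! i \<inter> Ys ! (k - ?l) \<subseteq> last Xs \<inter> hd Ys"
        using glue ilt kge ijk unfolding V W by fastforce
      moreover have "Xs ! i \<inter> last Xs \<subseteq> Xs ! j" if "j < ?l"
        using RX[of i j "?l - 1"] that ijk last by simp
      moreover have "hd Ys \<inter> Ys ! (k - ?l) \<subseteq> Ys ! (j - ?l)" if "\<not> j < ?l"
        using RY[of 0 "j - ?l" "k - ?l"] that ijk hd by simp
      ultimately show ?thesis using ilt kge by (auto simp: nth_append)
    qed
  qed
  moreover have "\<forall>e\<in>E \<union> E'. \<exists>X\<in>set (Xs @ Ys). e \<subseteq> X"
    using Xs Ys unfolding is_path_decomposition_def by (metis Un_iff set_append)
  ultimately show ?thesis
    using V W unfolding is_path_decomposition_def by auto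
qed

lemma pd_width_le:
  assumes "Xs \<noteq> []" "\<forall>X\<in>set Xs. card X \<le> Suc k"
  shows "pd_width Xs \<le> int k"
proof -
  have "(MAX X\<in>set Xs. int (card X)) \<le> int (Suc k)"
    using assms by (subst Max_le_iff) auto
  then show ?thesis unfolding pd_width_def by simp
qed

lemma clique_edges_subset: "e \<in> clique_edges K \<Longrightarrow> e \<subseteq> K"
  unfolding clique_edges_def by auto

definition walk_edges :: "(nat \<Rightarrow> 'v) \<Rightarrow> nat \<Rightarrow> nat \<Rightarrow> 'v set set" where
  "walk_edges p s n = (\<lambda>t. {p t, p (Suc t)}) ` {s..<s + n}"

lemma walk_edges_add: "walk_edges p s (n + n') = walk_edges p s n \<union> walk_edges p (s + n) n'"
proof -
  have "{s..<s + (n + n')} = {s..<s + n} \<union> {s + n..<s + n + n'}" by auto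
  then show ?thesis unfolding walk_edges_def by auto
qed

lemma walk_edges_Suc: "walk_edges p s (Suc n) = insert {p s, p (Suc s)} (walk_edges p (Suc s) n)"
  using walk_edges_add[of p s 1 n] unfolding walk_edges_def by simp

lemma path_edges_eq_walk_edges: "path_edges b j = walk_edges (pathv b j) 0 b"
  unfolding path_edges_def walk_edges_def by auto

fun chain_bags :: "nat \<Rightarrow> (nat \<Rightarrow> vert) \<Rightarrow> nat \<Rightarrow> nat \<Rightarrow> nat \<Rightarrow> vert set list" where
  "chain_bags i p q s 0 = []"
| "chain_bags i p q s (Suc 0) = [tri i q \<union> {p s, p (Suc s)}]"
| "chain_bags i p q s (Suc (Suc n)) =
     (tri i q \<union> {p s, p (Suc s)}) # (k4 i q \<union> {p (Suc s)}) # chain_bags i p (Suc q) (Suc s) (Suc n)"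

lemma chain_bags_ne_Nil: "chain_bags i p q s (Suc n) \<noteq> []"
  by (cases n) auto

lemma hd_chain_bags: "hd (chain_bags i p q s (Suc n)) = tri i q \<union> {p s, p (Suc s)}"
  by (cases n) auto

lemma last_chain_bags: "p (s + Suc n) \<in> last (chain_bags i p q s (Suc n))"
proof (induction n arbitrary: q s)
  case (Suc n)
  then show ?case using Suc.IH[of "Suc s" "Suc q"] chain_bags_ne_Nil[of i p "Suc q" "Suc s" n] by simp
qed simp

lemma chain_bags_path_decomposition:
  assumes "inj_on p {s..s + Suc n}" and "\<And>t a q' r. p t \<noteq> T a q' r" and "\<And>t a q' r. p t \<noteq> F a q' r"
  shows "is_path_decomposition
           ((\<Union>q'\<in>{q..q+n}. tri i q') \<union> (\<Union>q'\<in>{q..<q+n}. k4 i q') \<union> p ` {s..s + Suc n})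
           ((\<Union>q'\<in>{q..q+n}. clique_edges (tri i q')) \<union> (\<Union>q'\<in>{q..<q+n}. clique_edges (k4 i q'))
              \<union> walk_edges p s (Suc n))
           (chain_bags i p q s (Suc n))"
  using assms(1)
proof (induction n arbitrary: q s)
  case 0
  have "{s..Suc s} = {s, Suc s}" by auto
  then show ?case
    by (auto intro!: path_decomposition_singleton simp: walk_edges_def dest: clique_edges_subset)
next
  case (Suc n)
  let ?A = "tri i q \<union> {p s, p (Suc s)}" and ?B = "k4 i q \<union> {p (Suc s)}"
  let ?V = "(\<Union>q'\<in>{Suc q..Suc q+n}. tri i q') \<union> (\<Union>q'\<in>{Suc q..<Suc q+n}. k4 i q') \<union> p ` {Suc s..Suc s + Suc n}"
  let ?E = "(\<Union>q'\<in>{Suc q..Suc q+n}. clique_edges (tri i q')) \<union> (\<Union>q'\<in>{Suc q..<Suc q+n}. clique_edges (k4 i q'))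
              \<union> walk_edges p (Suc s) (Suc n)"
  have A: "is_path_decomposition ?A (insert {p s, p (Suc s)} (clique_edges (tri i q))) [?A]"
    by (rule path_decomposition_singleton) (auto dest: clique_edges_subset)
  have B: "is_path_decomposition ?B (clique_edges (k4 i q)) [?B]"
    by (rule path_decomposition_singleton) (auto dest: clique_edges_subset)
  have "inj_on p {Suc s..Suc s + Suc n}"
    using Suc.prems by (rule inj_on_subset) auto
  then have tail: "is_path_decomposition ?V ?E (chain_bags i p (Suc q) (Suc s) (Suc n))"
    using Suc.IH by blast
  have "p s \<notin> p ` {Suc s..Suc s + Suc n}"
    using Suc.prems unfolding inj_on_def by fastforce
  then have glue: "(?A \<union> ?B) \<inter> ?V \<subseteq> last ([?A] @ [?B]) \<inter> hd (chain_bags i p (Suc q) (Suc s) (Suc n))"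
    using assms(2,3) assms(2,3)[THEN not_sym] by (auto simp: hd_chain_bags tri_def k4_def)
  have "is_path_decomposition ((?A \<union> ?B) \<union> ?V)
          ((insert {p s, p (Suc s)} (clique_edges (tri i q)) \<union> clique_edges (k4 i q)) \<union> ?E)
          (([?A] @ [?B]) @ chain_bags i p (Suc q) (Suc s) (Suc n))"
    by (rule path_decomposition_append[OF path_decomposition_append[OF A B] tail glue]) simp
  moreover have "{q..q + Suc n} = insert q {Suc q..Suc q + n}" "{q..<q + Suc n} = insert q {Suc q..<Suc q + n}"
    "{s..s + Suc (Suc n)} = insert s {Suc s..Suc s + Suc n}" by auto
  then have "(?A \<union> ?B) \<union> ?V =
      (\<Union>q'\<in>{q..q + Suc n}. tri i q') \<union> (\<Union>q'\<in>{q..<q + Suc n}. k4 i q') \<union> p ` {s..s + Suc (Suc n)}"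
    "(insert {p s, p (Suc s)} (clique_edges (tri i q)) \<union> clique_edges (k4 i q)) \<union> ?E =
      (\<Union>q'\<in>{q..q + Suc n}. clique_edges (tri i q')) \<union> (\<Union>q'\<in>{q..<q + Suc n}. clique_edges (k4 i q'))
        \<union> walk_edges p s (Suc (Suc n))"
    by (auto simp: walk_edges_Suc[of p s])
  ultimately show ?case by simp
qed

lemma card_le_5: "card {a, b, c, d, e} \<le> 5"
  using card_length[of "[a, b, c, d, e]"] by simp

lemma card_chain_bags_le: "X \<in> set (chain_bags i p q s n) \<Longrightarrow> card X \<le> 5"
  by (induction i p q s n rule: chain_bags.induct)
     (auto simp: tri_def k4_def insert_commute intro: card_le_5[THEN order_trans] order_refl)

lemma length_chain_bags: "length (chain_bags i p q s n) = 2 * n - 1"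
  by (induction i p q s n rule: chain_bags.induct) auto

lemma H_verts_cases: "x \<in> H_verts w i \<Longrightarrow> (\<exists>q r. x = T i q r) \<or> (\<exists>q r. x = F i q r)"
  unfolding H_verts_def tri_def k4_def by auto

lemma H_path_decomposition:
  assumes "0 < w i" "inj_on p {s..s + w i}" "\<And>t a q' r. p t \<noteq> T a q' r" "\<And>t a q' r. p t \<noteq> F a q' r"
  shows "is_path_decomposition (H_verts w i \<union> p ` {s..s + w i}) (H_edges w i \<union> walk_edges p s (w i))
           (chain_bags i p 1 s (w i))"
proof -
  obtain n where n: "w i = Suc n" using assms(1) gr0_conv_Suc by blast
  have "{1..1 + n} = {1..w i}" "{1..<1 + n} = {1..<w i}" using n by auto
  then show ?thesis
    using chain_bags_path_decomposition[of p s n i 1] assms(2-4)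
    unfolding H_verts_def H_edges_def n by (simp add: Un_assoc)
qed

fun gadget_bags :: "(nat \<Rightarrow> nat) \<Rightarrow> (nat \<Rightarrow> vert) \<Rightarrow> nat list \<Rightarrow> nat \<Rightarrow> vert set list" where
  "gadget_bags w p [] s = []"
| "gadget_bags w p (i # js) s = chain_bags i p 1 s (w i) @ gadget_bags w p js (s + w i)"

lemma gadget_bags_ne_Nil: "L \<noteq> [] \<Longrightarrow> \<forall>i\<in>set L. 0 < w i \<Longrightarrow> gadget_bags w p L s \<noteq> []"
  by (cases L) (auto simp: chain_bags_ne_Nil gr0_conv_Suc)

lemma hd_gadget_bags:
  assumes "L \<noteq> []" "\<forall>i\<in>set L. 0 < w i"
  shows "p s \<in> hd (gadget_bags w p L s)"
proof -
  obtain i js n where "L = i # js" "w i = Suc n"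
    using assms by (metis gr0_conv_Suc list.set_intros(1) neq_Nil_conv)
  then show ?thesis using hd_chain_bags[of i p 1 s n] chain_bags_ne_Nil[of i p 1 s n] by simp
qed

lemma last_gadget_bags:
  "L \<noteq> [] \<Longrightarrow> \<forall>i\<in>set L. 0 < w i \<Longrightarrow> p (s + sum_list (map w L)) \<in> last (gadget_bags w p L s)"
proof (induction L arbitrary: s rule: list_nonempty_induct)
  case (single i)
  then show ?case using last_chain_bags[of p s "w i - 1" i 1] by simp
next
  case (cons i js)
  have "gadget_bags w p js (s + w i) \<noteq> []"
    using cons by (intro gadget_bags_ne_Nil) auto
  then show ?case using cons.IH[of "s + w i"] cons.prems by (simp add: add.assoc)
qed

lemma length_gadget_bags:
  "\<forall>i\<in>set L. 0 < w i \<Longrightarrow> length (gadget_bags w p L s) + length L = 2 * sum_list (map w L)"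
  by (induction L arbitrary: s) (auto simp: length_chain_bags)

lemma card_gadget_bags_le: "X \<in> set (gadget_bags w p L s) \<Longrightarrow> card X \<le> 5"
  by (induction L arbitrary: s) (auto dest: card_chain_bags_le)

lemma gadget_bags_path_decomposition:
  assumes "L \<noteq> []" "distinct L" "\<forall>i\<in>set L. 0 < w i" "inj_on p {s..s + sum_list (map w L)}"
    and "\<And>t a q' r. p t \<noteq> T a q' r" "\<And>t a q' r. p t \<noteq> F a q' r"
  shows "is_path_decomposition
           ((\<Union>i\<in>set L. H_verts w i) \<union> p ` {s..s + sum_list (map w L)})
           ((\<Union>i\<in>set L. H_edges w i) \<union> walk_edges p s (sum_list (map w L)))
           (gadget_bags w p L s)"
  using assms(1-4)
proof (induction L arbitrary: s rule: list_nonempty_induct)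
  case (single i)
  then show ?case using H_path_decomposition[of w i p s] assms(5,6) by simp
next
  case (cons i js)
  let ?s' = "s + w i" and ?n = "sum_list (map w js)"
  have head: "is_path_decomposition (H_verts w i \<union> p ` {s..?s'}) (H_edges w i \<union> walk_edges p s (w i))
      (chain_bags i p 1 s (w i))"
    using cons.prems by (intro H_path_decomposition assms(5,6)) (auto intro: inj_on_subset)
  have tail: "is_path_decomposition ((\<Union>i\<in>set js. H_verts w i) \<union> p ` {?s'..?s' + ?n})
      ((\<Union>i\<in>set js. H_edges w i) \<union> walk_edges p ?s' ?n) (gadget_bags w p js ?s')"
    using cons.prems by (intro cons.IH) (auto simp: add.assoc intro: inj_on_subset)
  have "(H_verts w i \<union> p ` {s..?s'}) \<inter> ((\<Union>i\<in>set js. H_verts w i) \<union> p ` {?s'..?s' + ?n}) \<subseteq> {p ?s'}"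
  proof -
    have "i \<notin> set js" using cons.prems(1) by simp
    then have "H_verts w i \<inter> (\<Union>i\<in>set js. H_verts w i) = {}"
      by (auto dest!: H_verts_cases)
    moreover have "H_verts w i' \<inter> range p = {}" for i'
      using assms(5,6) by (auto dest!: H_verts_cases)
    moreover have "p ` {s..?s'} \<inter> p ` {?s'..?s' + ?n} \<subseteq> {p ?s'}"
    proof
      fix x assume "x \<in> p ` {s..?s'} \<inter> p ` {?s'..?s' + ?n}"
      then obtain t t' where t: "t \<in> {s..?s'}" "t' \<in> {?s'..?s' + ?n}" "x = p t" "p t = p t'"
        by auto
      then have "t = t'" using inj_onD[OF cons.prems(3), of t t'] by simp
      then show "x \<in> {p ?s'}" using t by simp
    qed
    ultimately show ?thesis by blast
  qed
  also have "\<dots> \<subseteq> last (chain_bags i p 1 s (w i)) \<inter> hd (gadget_bags w p js ?s')"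
    using last_chain_bags[of p s "w i - 1" i 1] hd_gadget_bags[of js w p ?s'] cons by simp
  finally have "is_path_decomposition ((H_verts w i \<union> p ` {s..?s'}) \<union> ((\<Union>i\<in>set js. H_verts w i) \<union> p ` {?s'..?s' + ?n}))
      ((H_edges w i \<union> walk_edges p s (w i)) \<union> ((\<Union>i\<in>set js. H_edges w i) \<union> walk_edges p ?s' ?n))
      (gadget_bags w p (i # js) s)"
    using path_decomposition_append[OF head tail] by simp
  moreover have "p ` {s..s + sum_list (map w (i # js))} = p ` {s..?s'} \<union> p ` {?s'..?s' + ?n}"
    by (auto simp flip: image_Un intro!: arg_cong[where f = "image p"])
  moreover have "walk_edges p s (sum_list (map w (i # js))) = walk_edges p s (w i) \<union> walk_edges p ?s' ?n"
    by (simp add: walk_edges_add)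
  ultimately show ?case by (simp add: Un_ac)
qed

lemma path_verts_cases: "x \<in> path_verts B j \<Longrightarrow> x = C j 1 \<or> x = C (Suc j) 0 \<or> (\<exists>t. x = P j t)"
  unfolding path_verts_def pathv_def by auto

lemma inj_on_pathv: "0 < B \<Longrightarrow> inj_on (pathv B j) {0..B}"
  unfolding inj_on_def pathv_def by auto

lemma pathv_ne_T: "pathv B j t \<noteq> T a q r" and pathv_ne_F: "pathv B j t \<noteq> F a q r"
  unfolding pathv_def by auto

lemma card_k5: "card (k5 j) = 5"
proof -
  have "k5 j = C j ` {..<5}" unfolding k5_def by auto
  then show ?thesis by (simp add: card_image inj_on_def)
qed

text \<open>\<open>L j\<close> enumerates the block \<open>S\<^sub>j\<close> of the partition; \<open>B\<close> is the common length of the paths.\<close>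

locale three_partition =
  fixes m :: nat and w :: "nat \<Rightarrow> nat" and B :: nat and L :: "nat \<Rightarrow> nat list"
  assumes lists_ne_Nil: "j \<in> {1..m} \<Longrightarrow> L j \<noteq> []"
    and lists_distinct: "j \<in> {1..m} \<Longrightarrow> distinct (L j)"
    and lists_disjoint: "j \<in> {1..m} \<Longrightarrow> j' \<in> {1..m} \<Longrightarrow> j \<noteq> j' \<Longrightarrow> set (L j) \<inter> set (L j') = {}"
    and weights_pos: "j \<in> {1..m} \<Longrightarrow> i \<in> set (L j) \<Longrightarrow> 0 < w i"
    and lists_sum: "j \<in> {1..m} \<Longrightarrow> sum_list (map w (L j)) = B"
    and lists_cover: "(\<Union>j\<in>{1..m}. set (L j)) = {1..3*m}"
begin

fun bags :: "nat \<Rightarrow> vert set list" where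
  "bags 0 = [k5 1]"
| "bags (Suc j) = bags j @ gadget_bags w (pathv B (Suc j)) (L (Suc j)) 0 @ [k5 (Suc (Suc j))]"

definition prefix_verts :: "nat \<Rightarrow> vert set" where
  "prefix_verts j = (\<Union>j'\<in>{1..j}. \<Union>i\<in>set (L j'). H_verts w i) \<union> (\<Union>j'\<in>{1..Suc j}. k5 j')
     \<union> (\<Union>j'\<in>{1..j}. path_verts B j')"

definition prefix_edges :: "nat \<Rightarrow> vert set set" where
  "prefix_edges j = (\<Union>j'\<in>{1..j}. \<Union>i\<in>set (L j'). H_edges w i) \<union> (\<Union>j'\<in>{1..Suc j}. clique_edges (k5 j'))
     \<union> (\<Union>j'\<in>{1..j}. path_edges B j')"

lemma last_bags: "last (bags j) = k5 (Suc j)"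
  by (cases j) auto

lemma card_bags_le: "X \<in> set (bags j) \<Longrightarrow> card X \<le> 5"
  by (induction j) (auto simp: card_k5 dest: card_gadget_bags_le)

lemma length_bags:
  "j \<le> m \<Longrightarrow> length (bags j) + (\<Sum>j'\<in>{1..j}. length (L j')) = 1 + j * (2 * B + 1)"
proof (induction j)
  case (Suc j)
  have "length (gadget_bags w (pathv B (Suc j)) (L (Suc j)) 0) + length (L (Suc j)) = 2 * B"
    using Suc.prems weights_pos lists_sum by (subst length_gadget_bags) auto
  then show ?case using Suc by simp
qed simp

lemma bags_path_decomposition:
  "j \<le> m \<Longrightarrow> is_path_decomposition (prefix_verts j) (prefix_edges j) (bags j)"
proof (induction j)
  case 0
  show ?case
    unfolding prefix_verts_def prefix_edges_def
    by (auto intro!: path_decomposition_singleton dest: clique_edges_subset)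
next
  case (Suc j)
  let ?p = "pathv B (Suc j)" and ?L = "L (Suc j)"
  let ?S = "gadget_bags w ?p ?L 0"
  let ?H = "\<Union>i\<in>set ?L. H_verts w i"
  have j: "Suc j \<in> {1..m}" using Suc.prems by simp
  have sum: "sum_list (map w ?L) = B" and pos: "\<forall>i\<in>set ?L. 0 < w i" and ne: "?L \<noteq> []"
    using lists_sum[OF j] weights_pos[OF j] lists_ne_Nil[OF j] by auto
  then have "0 < B" by (cases ?L) auto
  have gadgets: "is_path_decomposition (?H \<union> path_verts B (Suc j))
      ((\<Union>i\<in>set ?L. H_edges w i) \<union> path_edges B (Suc j)) ?S"
    using gadget_bags_path_decomposition[of ?L w ?p 0] lists_distinct[OF j] ne pos inj_on_pathv[OF \<open>0 < B\<close>]
    by (simp add: sum path_verts_def path_edges_eq_walk_edges pathv_ne_T pathv_ne_F)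
  have clique: "is_path_decomposition (k5 (Suc (Suc j))) (clique_edges (k5 (Suc (Suc j)))) [k5 (Suc (Suc j))]"
    by (auto intro!: path_decomposition_singleton dest: clique_edges_subset)
  have "(?H \<union> path_verts B (Suc j)) \<inter> k5 (Suc (Suc j)) \<subseteq> {?p B}"
    using \<open>0 < B\<close> by (auto simp: k5_def pathv_def dest!: H_verts_cases path_verts_cases)
  also have "\<dots> \<subseteq> last ?S \<inter> hd [k5 (Suc (Suc j))]"
    using last_gadget_bags[of ?L w ?p 0] ne pos sum \<open>0 < B\<close> by (simp add: k5_def pathv_def)
  finally have block: "is_path_decomposition (?H \<union> path_verts B (Suc j) \<union> k5 (Suc (Suc j)))
      ((\<Union>i\<in>set ?L. H_edges w i) \<union> path_edges B (Suc j) \<union> clique_edges (k5 (Suc (Suc j))))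
      (?S @ [k5 (Suc (Suc j))])"
    by (rule path_decomposition_append[OF gadgets clique])
  have "i \<notin> set ?L" if "j' \<in> {1..j}" "i \<in> set (L j')" for j' i
    using lists_disjoint[of j' "Suc j"] Suc.prems that by auto
  then have "prefix_verts j \<inter> (?H \<union> path_verts B (Suc j) \<union> k5 (Suc (Suc j))) \<subseteq> {C (Suc j) 1}"
    unfolding prefix_verts_def by (auto simp: k5_def dest!: H_verts_cases path_verts_cases)
  also have "\<dots> \<subseteq> last (bags j) \<inter> hd (?S @ [k5 (Suc (Suc j))])"
    using hd_gadget_bags[of ?L w ?p 0] gadget_bags_ne_Nil[of ?L w ?p 0] ne pos
    by (simp add: last_bags k5_def pathv_def)
  finally have "is_path_decomposition (prefix_verts j \<union> (?H \<union> path_verts B (Suc j) \<union> k5 (Suc (Suc j))))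
      (prefix_edges j \<union> ((\<Union>i\<in>set ?L. H_edges w i) \<union> path_edges B (Suc j) \<union> clique_edges (k5 (Suc (Suc j)))))
      (bags (Suc j))"
    using path_decomposition_append[OF Suc.IH block] Suc.prems by simp
  moreover have "{1..Suc j} = insert (Suc j) {1..j}" "{1..Suc (Suc j)} = insert (Suc (Suc j)) {1..Suc j}"
    by auto
  ultimately show ?case
    unfolding prefix_verts_def prefix_edges_def by (simp add: Un_ac)
qed

lemma bags_ne_Nil: "bags j \<noteq> []"
  by (cases j) auto

lemma G_path_decomposition:
  assumes "nat b = B"
  shows "is_path_decomposition (G_verts m w b) (G_edges m w b) (bags m)"
proof -
  have "(\<Union>j\<in>{1..m}. \<Union>i\<in>set (L j). H_verts w i) = (\<Union>i\<in>{1..3*m}. H_verts w i)"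
    "(\<Union>j\<in>{1..m}. \<Union>i\<in>set (L j). H_edges w i) = (\<Union>i\<in>{1..3*m}. H_edges w i)"
    unfolding lists_cover[symmetric] by auto
  then have "prefix_verts m = G_verts m w b" "prefix_edges m = G_edges m w b"
    unfolding prefix_verts_def prefix_edges_def G_verts_def G_edges_def Hmb_verts_def Hmb_edges_def assms
    by (simp_all add: Un_ac)
  then show ?thesis using bags_path_decomposition[of m] by simp
qed

lemma sum_length_lists: "(\<Sum>j\<in>{1..m}. length (L j)) = 3 * m"
proof -
  have "(\<Sum>j\<in>{1..m}. length (L j)) = (\<Sum>j\<in>{1..m}. card (set (L j)))"
    using lists_distinct by (simp add: distinct_card)
  also have "\<dots> = card (\<Union>j\<in>{1..m}. set (L j))"
    using lists_disjoint by (intro card_UN_disjoint[symmetric]) auto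
  finally show ?thesis unfolding lists_cover by simp
qed

lemma sum_weights: "(\<Sum>i\<in>{1..3*m}. w i) = m * B"
proof -
  have "(\<Sum>i\<in>{1..3*m}. w i) = (\<Sum>j\<in>{1..m}. \<Sum>i\<in>set (L j). w i)"
    unfolding lists_cover[symmetric] using lists_disjoint by (intro sum.UNION_disjoint) auto
  also have "\<dots> = (\<Sum>j\<in>{1..m}. B)"
    using lists_distinct lists_sum by (intro sum.cong) (auto simp: sum_list_distinct_conv_sum_set)
  finally show ?thesis by simp
qed

lemma length_bags_eq: "int (length (bags m)) = 1 - 2 * int m + 2 * (\<Sum>i\<in>{1..3*m}. int (w i))"
proof -
  have "length (bags m) + 3 * m = 1 + m * (2 * B + 1)"
    using length_bags[of m] sum_length_lists by simp
  then have "int (length (bags m) + 3 * m) = int (1 + m * (2 * B + 1))"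
    by (rule arg_cong)
  then have "int (length (bags m)) + 2 * int m = 1 + 2 * (int m * int B)"
    by (simp add: algebra_simps)
  moreover have "(\<Sum>i\<in>{1..3*m}. int (w i)) = int m * int B"
    using sum_weights by (simp flip: of_nat_sum of_nat_mult)
  ultimately show ?thesis by linarith
qed

end

lemma three_partition_of_sets:
  fixes b :: int
  assumes wpos: "\<forall>i\<in>{1..3*m}. w i > 0"
    and disj: "\<forall>j\<in>{1..m}. \<forall>k\<in>{1..m}. j \<noteq> k \<longrightarrow> Sp j \<inter> Sp k = {}"
    and cover: "(\<Union>j\<in>{1..m}. Sp j) = {1..3*m}"
    and sums: "\<forall>j\<in>{1..m}. (\<Sum>i\<in>Sp j. int (w i)) = b"
  shows "three_partition m w (nat b) (\<lambda>j. sorted_list_of_set (Sp j))"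
proof -
  have sub: "Sp j \<subseteq> {1..3*m}" if "j \<in> {1..m}" for j
    using cover that by blast
  have fin: "finite (Sp j)" if "j \<in> {1..m}" for j
    using sub[OF that] by (rule finite_subset) simp
  have sum_nat: "sum w (Sp j) = nat b" if "j \<in> {1..m}" for j
    using sums that by (metis nat_int of_nat_sum)
  have "Sp j \<noteq> {}" if j: "j \<in> {1..m}" for j
  proof
    assume "Sp j = {}"
    then have "nat b = 0" using sum_nat[OF j] by simp
    have "1 \<in> {1..3*m}" using j by simp
    then obtain k where k: "k \<in> {1..m}" "1 \<in> Sp k" using cover by blast
    have "w 1 \<le> sum w (Sp k)" using k(2) fin[OF k(1)] by (auto intro: member_le_sum)
    then show False using sum_nat[OF k(1)] wpos \<open>nat b = 0\<close> \<open>1 \<in> {1..3*m}\<close> by fastforce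
  qed
  then have ne: "sorted_list_of_set (Sp j) \<noteq> []" if "j \<in> {1..m}" for j
    using fin that by simp
  have set: "set (sorted_list_of_set (Sp j)) = Sp j" if "j \<in> {1..m}" for j
    using fin that by simp
  show ?thesis
  proof
    show "(\<Union>j\<in>{1..m}. set (sorted_list_of_set (Sp j))) = {1..3*m}"
      using set cover by simp
  next
    fix j j' assume "j \<in> {1..m}" "j' \<in> {1..m}" "j \<noteq> j'"
    then show "set (sorted_list_of_set (Sp j)) \<inter> set (sorted_list_of_set (Sp j')) = {}"
      using set disj by simp
  next
    fix j i assume "j \<in> {1..m}" "i \<in> set (sorted_list_of_set (Sp j))"
    then show "0 < w i" using set sub wpos by blast
  next
    fix j assume "j \<in> {1..m}"
    then show "sum_list (map w (sorted_list_of_set (Sp j))) = nat b"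
      using sum_nat by (simp add: sum_list_distinct_conv_sum_set set)
  qed (use ne in simp_all)
qed

theorem mainTheorem9:
  fixes m :: nat and w :: "nat \<Rightarrow> nat" and b :: int and Sp :: "nat \<Rightarrow> nat set"
  assumes wpos: "\<forall>i\<in>{1..3*m}. w i > 0"
    and part_disj: "\<forall>j\<in>{1..m}. \<forall>k\<in>{1..m}. j \<noteq> k \<longrightarrow> Sp j \<inter> Sp k = {}"
    and part_cover: "(\<Union>j\<in>{1..m}. Sp j) = {1..3*m}"
    and part_sum: "\<forall>j\<in>{1..m}. (\<Sum>i\<in>Sp j. int (w i)) = b"
  shows "\<exists>Xs. is_path_decomposition (G_verts m w b) (G_edges m w b) Xs \<and>
              pd_width Xs \<le> 4 \<and>
              int (length Xs) \<le> 1 - 2 * int m + 2 * (\<Sum>i\<in>{1..3*m}. int (w i))"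
proof -
  interpret three_partition m w "nat b" "\<lambda>j. sorted_list_of_set (Sp j)"
    using assms by (rule three_partition_of_sets)
  show ?thesis
  proof (intro exI conjI)
    show "is_path_decomposition (G_verts m w b) (G_edges m w b) (bags m)"
      by (rule G_path_decomposition) simp
    show "pd_width (bags m) \<le> 4"
      using pd_width_le[of "bags m" 4] bags_ne_Nil card_bags_le by simp
    show "int (length (bags m)) \<le> 1 - 2 * int m + 2 * (\<Sum>i\<in>{1..3*m}. int (w i))"
      using length_bags_eq by simp
  qed
qed

end
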